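(* Let $p=2m\ge 4$ be even and let $U$ be the graph obtained from the cycle $C_p$ (vertices $v_1,\dots,v_p$) by attaching a single pendant vertex $u$ adjacent to $v_1$. Let $\tilde\Delta$ be the distance squared matrix of $C_p$ (equivalently, the principal submatrix of the distance squared matrix of $U$ indexed by $v_1,\dots,v_p$), and let $\mathbf x\in\mathbb R^p$ have entries $x_i=d_U(u,v_i)^2$. Then $\tilde\Delta$ is invertible and \[ \mathbf x^T\tilde\Delta^{-1}\mathbf x>0. \]
   Context: For a connected graph with vertices $1,\dots,n$, the distance squared matrix is the matrix with $(i,j)$ entry $d_{ij}^2$, where $d_{ij}$ is the graph distance between $i$ and $j$; $d_U$ denotes distance in $U$. *)

theory Defs
  imports "Jordan_Normal_Form.Matrix"
begin

definition is_walk :: "(nat \<Rightarrow> nat \<Rightarrow> bool) \<Rightarrow> nat list \<Rightarrow> bool" where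
  "is_walk E xs \<longleftrightarrow> xs \<noteq> [] \<and> (\<forall>i. Suc i < length xs \<longrightarrow> E (xs ! i) (xs ! Suc i))"

definition gdist :: "(nat \<Rightarrow> nat \<Rightarrow> bool) \<Rightarrow> nat \<Rightarrow> nat \<Rightarrow> nat" where
  "gdist E a b = (LEAST n. \<exists>xs. is_walk E xs \<and> hd xs = a \<and> last xs = b \<and> length xs = Suc n)"

text \<open>Cycle C_p on vertices 0..p-1 (vertex i stands for v_(i+1)).\<close>
definition cycle_adj :: "nat \<Rightarrow> nat \<Rightarrow> nat \<Rightarrow> bool" where
  "cycle_adj p i j \<longleftrightarrow> i < p \<and> j < p \<and> (j = Suc i mod p \<or> i = Suc j mod p)"

text \<open>Unicyclic graph U: C_p plus pendant vertex u = p adjacent to v_1 = 0.\<close>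
definition pendant_adj :: "nat \<Rightarrow> nat \<Rightarrow> nat \<Rightarrow> bool" where
  "pendant_adj p i j \<longleftrightarrow> cycle_adj p i j \<or> (i = p \<and> j = 0) \<or> (i = 0 \<and> j = p)"

definition cycle_dsq :: "nat \<Rightarrow> real mat" where
  "cycle_dsq p = mat p p (\<lambda>(i, j). real (gdist (cycle_adj p) i j) ^ 2)"

definition pendant_vec :: "nat \<Rightarrow> real vec" where
  "pendant_vec p = vec p (\<lambda>i. real (gdist (pendant_adj p) p i) ^ 2)"

end

theory Submission
  imports Defs "Jordan_Normal_Form.Determinant"
begin

(* The distance in C_p between v_(i+1) and v_(j+1) depends only on the offset s = j - i mod p,
  through circ_dist p s = min s (p - s), so the distance squared matrix D is circulant. For p = 2m
  the second difference of s -> circ_dist p s ^ 2 is 2 everywhere except at the antipode s = m,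
  where it is 2 - 4m. Hence D maps the second difference centred at the antipode of j to a
  constant vector plus a multiple of e_j, and correcting by a multiple of the all-ones vector
  gives an explicit inverse of D.
  Since d_U(u, v) = d(v_1, v) + 1 and d(v, v_1) + d(v, v_(m+1)) = m on C_p, the vector x is
  D y for y = (m + 1)/S 1 + (1 + 1/m) e_1 - (1/m) e_(m+1), S being the row sum of D. So for every
  inverse B of D, x^T B x = x^T y = (m + 1) (sum_i x_i - S) / S, which is positive as each
  x_i = (d(v_1, v_i) + 1)^2 exceeds the corresponding term d(v_1, v_i)^2 of S. *)

lemma is_walk_Cons:
  "xs \<noteq> [] \<Longrightarrow> is_walk E (x # xs) \<longleftrightarrow> E x (hd xs) \<and> is_walk E xs"
  by (auto simp: is_walk_def hd_conv_nth nth_Cons split: nat.split)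

lemma is_walk_mono: "is_walk E xs \<Longrightarrow> (\<And>u v. E u v \<Longrightarrow> F u v) \<Longrightarrow> is_walk F xs"
  by (simp add: is_walk_def)

lemma is_walk_rev:
  assumes sym: "\<And>u v. E u v \<Longrightarrow> E v u" and walk: "is_walk E xs"
  shows "is_walk E (rev xs)"
  unfolding is_walk_def
proof (intro conjI allI impI)
  show "rev xs \<noteq> []" using walk by (simp add: is_walk_def)
  fix i assume i: "Suc i < length (rev xs)"
  define j where "j = length xs - Suc (Suc i)"
  have "E (xs ! j) (xs ! Suc j)" using walk i by (simp add: is_walk_def j_def)
  moreover have "rev xs ! i = xs ! Suc j" "rev xs ! Suc i = xs ! j"
    using i by (simp_all add: rev_nth j_def Suc_diff_Suc)
  ultimately show "E (rev xs ! i) (rev xs ! Suc i)" using sym by simp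
qed

lemma is_walk_potential_bound:
  assumes "is_walk E xs" and step: "\<And>u v. E u v \<Longrightarrow> f v \<le> f u + 1"
  shows "f (last xs) \<le> f (hd xs) + (length xs - 1)"
  using assms(1)
proof (induction xs)
  case Nil
  then show ?case by (simp add: is_walk_def)
next
  case (Cons x xs)
  show ?case
  proof (cases xs)
    case (Cons y ys)
    with Cons.prems have "E x y" "is_walk E xs" by (simp_all add: is_walk_Cons)
    with Cons.IH step[of x y] \<open>xs = y # ys\<close> show ?thesis by simp
  qed simp
qed

lemma gdist_eqI:
  assumes "is_walk E xs" "hd xs = a" "last xs = b" "length xs = Suc d"
    and step: "\<And>u v. E u v \<Longrightarrow> f v \<le> f u + 1" and "f a + d \<le> f b"
  shows "gdist E a b = d"
  unfolding gdist_def
proof (rule Least_equality)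
  show "\<exists>xs. is_walk E xs \<and> hd xs = a \<and> last xs = b \<and> length xs = Suc d"
    using assms by blast
next
  fix n assume "\<exists>xs. is_walk E xs \<and> hd xs = a \<and> last xs = b \<and> length xs = Suc n"
  then obtain ys where "is_walk E ys" "hd ys = a" "last ys = b" "length ys = Suc n" by blast
  then show "d \<le> n" using is_walk_potential_bound[of E ys f] step assms(6) by simp
qed

lemma cycle_adj_sym: "cycle_adj p u v \<Longrightarrow> cycle_adj p v u"
  by (auto simp: cycle_adj_def)

lemma cycle_walk_forward:
  assumes "0 < p"
  obtains xs where "is_walk (cycle_adj p) xs" "hd xs = a mod p" "last xs = (a + d) mod p"
    "length xs = Suc d"
proof
  let ?xs = "map (\<lambda>t. (a + t) mod p) [0..<Suc d]"
  have "cycle_adj p ((a + k) mod p) ((a + Suc k) mod p)" for k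
    using assms by (simp add: cycle_adj_def mod_Suc_eq)
  then show "is_walk (cycle_adj p) ?xs" by (simp add: is_walk_def del: upt_Suc)
  show "hd ?xs = a mod p" "last ?xs = (a + d) mod p" "length ?xs = Suc d"
    by (simp_all add: hd_map last_map del: upt_Suc)
qed

definition circ_dist :: "nat \<Rightarrow> nat \<Rightarrow> nat" where
  "circ_dist p s = min s (p - s)"

lemma cycle_offset:
  "i < p \<Longrightarrow> j < p \<Longrightarrow> (j + p - i) mod (p::nat) = (if i \<le> j then j - i else j + p - i)"
  by (auto simp: le_mod_geq)

lemma cycle_offset_shift:
  assumes "i < (p::nat)"
  shows "((j + r) mod p + p - i) mod p = ((j + p - i) mod p + r) mod p"
proof -
  have "((j + r) mod p + p - i) mod p = (j + r + (p - i)) mod p"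
    using assms by (metis Nat.add_diff_assoc less_imp_le mod_add_left_eq)
  also have "\<dots> = (j + (p - i) + r) mod p" by (simp add: ac_simps)
  also have "\<dots> = ((j + p - i) mod p + r) mod p"
    using assms by (metis Nat.add_diff_assoc less_imp_le mod_add_left_eq)
  finally show ?thesis .
qed

lemma circ_dist_Suc_mod:
  assumes "s < p"
  shows "circ_dist p (Suc s mod p) \<le> circ_dist p s + 1"
    and "circ_dist p s \<le> circ_dist p (Suc s mod p) + 1"
  using assms by (cases "Suc s = p"; simp add: circ_dist_def)+

lemma circ_dist_cycle_adj:
  assumes "cycle_adj p u v" "i < p"
  shows "circ_dist p ((v + p - i) mod p) \<le> circ_dist p ((u + p - i) mod p) + 1"
proof -
  have offset_Suc: "(Suc w mod p + p - i) mod p = Suc ((w + p - i) mod p) mod p" for w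
    using cycle_offset_shift[OF assms(2), of w 1] by simp
  have "(u + p - i) mod p < p" "(v + p - i) mod p < p" using assms(2) by simp_all
  moreover have "u = u mod p" "v = v mod p" using assms(1) by (simp_all add: cycle_adj_def)
  ultimately show ?thesis
    using assms(1) circ_dist_Suc_mod offset_Suc unfolding cycle_adj_def by metis
qed

lemma cycle_walk_exists:
  assumes "i < p" "j < p"
  obtains xs where "is_walk (cycle_adj p) xs" "hd xs = i" "last xs = j"
    "length xs = Suc (circ_dist p ((j + p - i) mod p))"
proof -
  define s where "s = (j + p - i) mod p"
  have p: "0 < p" using assms by simp
  show thesis
  proof (cases "s \<le> p - s")
    case True
    obtain xs where "is_walk (cycle_adj p) xs" "hd xs = i mod p" "last xs = (i + s) mod p"
      "length xs = Suc s" using cycle_walk_forward[OF p] .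
    moreover have "(i + s) mod p = j" using assms by (simp add: s_def cycle_offset)
    ultimately show thesis using True assms by (intro that) (simp_all add: circ_dist_def s_def)
  next
    case False
    obtain xs where "is_walk (cycle_adj p) xs" "hd xs = j mod p" "last xs = (j + (p - s)) mod p"
      "length xs = Suc (p - s)" using cycle_walk_forward[OF p] .
    moreover have "(j + (p - s)) mod p = i" using assms False by (auto simp: s_def cycle_offset)
    ultimately show thesis using False assms
      by (intro that[of "rev xs"])
         (simp_all add: is_walk_rev cycle_adj_sym hd_rev last_rev circ_dist_def s_def)
  qed
qed

lemma gdist_cycle:
  assumes "i < p" "j < p"
  shows "gdist (cycle_adj p) i j = circ_dist p ((j + p - i) mod p)"
proof -
  obtain xs where "is_walk (cycle_adj p) xs" "hd xs = i" "last xs = j"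
    "length xs = Suc (circ_dist p ((j + p - i) mod p))"
    using cycle_walk_exists[OF assms] .
  then show ?thesis
    by (rule gdist_eqI[where f = "\<lambda>v. circ_dist p ((v + p - i) mod p)"])
       (use assms circ_dist_cycle_adj in \<open>auto simp: circ_dist_def\<close>)
qed

lemma gdist_pendant:
  assumes "i < p"
  shows "gdist (pendant_adj p) p i = circ_dist p i + 1"
proof -
  obtain xs where xs: "is_walk (cycle_adj p) xs" "hd xs = 0" "last xs = i"
    "length xs = Suc (circ_dist p i)"
    using cycle_walk_exists[of 0 p i] assms by auto
  then have "xs \<noteq> []" by auto
  with xs have walk: "is_walk (pendant_adj p) (p # xs)"
    by (auto simp: is_walk_Cons pendant_adj_def intro: is_walk_mono)
  define f where "f v = (if v = p then 0 else circ_dist p v + 1)" for v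
  have step: "f v \<le> f u + 1" if "pendant_adj p u v" for u v
    using that circ_dist_cycle_adj[of p u v 0]
    by (auto simp: pendant_adj_def cycle_adj_def circ_dist_def f_def)
  show ?thesis
    by (rule gdist_eqI[OF walk, where f = f])
       (use xs assms step \<open>xs \<noteq> []\<close> in \<open>auto simp: f_def\<close>)
qed

lemma circ_dist_le_half: "p = 2 * m \<Longrightarrow> circ_dist p s \<le> m"
  by (simp add: circ_dist_def)

lemma circ_dist_reflect: "i < p \<Longrightarrow> circ_dist p ((p - i) mod p) = circ_dist p i"
  by (cases "i = 0") (simp_all add: circ_dist_def)

lemma circ_dist_antipode:
  assumes "p = 2 * m" "s < p"
  shows "circ_dist p ((s + m) mod p) = m - circ_dist p s"
  using assms by (cases "s < m") (auto simp: circ_dist_def le_mod_geq)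

lemma add_half_mod_eq_half_iff:
  assumes "p = 2 * m" "s < p"
  shows "(s + m) mod p = (m::nat) \<longleftrightarrow> s = 0"
  using assms by (cases "s < m") (auto simp: le_mod_geq)

lemma circ_dist_sq_second_difference:
  assumes "p = 2 * m" "0 < m" "u < p"
  shows "real (circ_dist p (Suc u mod p))^2 + real (circ_dist p ((u + (p - 1)) mod p))^2
    = 2 * real (circ_dist p u)^2 + 2 - (if u = m then 4 * real m else 0)"
proof -
  consider "u = 0" | "0 < u" "u < m" | "u = m" | "m < u" "Suc u < p" | "m < u" "Suc u = p"
    using assms by linarith
  then show ?thesis
  proof cases
    case 1
    then show ?thesis using assms by (simp add: circ_dist_def)
  next
    case 2
    then have "circ_dist p (Suc u mod p) = u + 1" "circ_dist p ((u + (p - 1)) mod p) = u - 1"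
      "circ_dist p u = u"
      using assms by (auto simp: circ_dist_def le_mod_geq)
    then show ?thesis using 2 by (simp add: of_nat_diff power2_eq_square algebra_simps)
  next
    case 3
    have "circ_dist p (Suc u mod p) = m - 1" "circ_dist p ((u + (p - 1)) mod p) = m - 1"
      "circ_dist p u = m"
      by (cases "m = 1") (use 3 assms in \<open>auto simp: circ_dist_def le_mod_geq\<close>)
    then show ?thesis using 3 assms by (simp add: of_nat_diff power2_eq_square algebra_simps)
  next
    case 4
    then have "circ_dist p (Suc u mod p) = p - u - 1"
      "circ_dist p ((u + (p - 1)) mod p) = p - u + 1" "circ_dist p u = p - u"
      using assms by (auto simp: circ_dist_def le_mod_geq)
    then show ?thesis using 4 assms by (simp add: of_nat_diff power2_eq_square algebra_simps)
  next
    case 5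
    then have "circ_dist p (Suc u mod p) = 0" "circ_dist p ((u + (p - 1)) mod p) = 2"
      "circ_dist p u = 1"
      using assms by (auto simp: circ_dist_def le_mod_geq)
    then show ?thesis using 5 assms by (simp add: power2_eq_square)
  qed
qed

definition circ_dsq_sum :: "nat \<Rightarrow> real" where
  "circ_dsq_sum p = (\<Sum>s<p. real (circ_dist p s)^2)"

lemma circ_dsq_sum_pos: "1 < p \<Longrightarrow> 0 < circ_dsq_sum p"
  unfolding circ_dsq_sum_def by (rule sum_pos2[where i = 1]) (auto simp: circ_dist_def)

lemma sum_cyclic_shift:
  assumes "i < (p::nat)"
  shows "(\<Sum>k<p. g ((k + p - i) mod p)) = (\<Sum>s<p. g s)"
proof -
  have undo: "((k + p - i) mod p + i) mod p = k" if "k < p" for k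
    using assms that by (simp add: mod_add_left_eq)
  show ?thesis
  proof (rule sum.reindex_bij_witness
      [where j = "\<lambda>k. (k + p - i) mod p" and i = "\<lambda>s. (s + i) mod p"])
    fix s assume "s \<in> {..<p}"
    then show "((s + i) mod p + p - i) mod p = s"
      using undo cycle_offset_shift[OF assms, of s i] by simp
  qed (use assms undo in auto)
qed

lemma cycle_dsq_carrier: "cycle_dsq p \<in> carrier_mat p p"
  by (simp add: cycle_dsq_def)

lemma cycle_dsq_index:
  "i < p \<Longrightarrow> j < p \<Longrightarrow> cycle_dsq p $$ (i, j) = real (circ_dist p ((j + p - i) mod p))^2"
  by (simp add: cycle_dsq_def gdist_cycle)

lemma pendant_vec_index: "i < p \<Longrightarrow> pendant_vec p $ i = (real (circ_dist p i) + 1)^2"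
  by (simp add: pendant_vec_def gdist_pendant)

lemma sum_mult_delta:
  fixes f :: "'a \<Rightarrow> 'b::semiring_0"
  shows "finite A \<Longrightarrow> a \<in> A \<Longrightarrow> (\<Sum>k\<in>A. f k * (if k = a then c else 0)) = f a * c"
  by (simp add: if_distrib[where f = "times _"] cong: if_cong)

definition cycle_dsq_inv :: "nat \<Rightarrow> real mat" where
  "cycle_dsq_inv p = mat p p (\<lambda>(k, j).
     1 / (real p * circ_dsq_sum p)
     + (if k = (j + p div 2) mod p then 1 / real p else 0)
     + (if k = (j + p div 2 + 1) mod p then - 1 / (2 * real p) else 0)
     + (if k = (j + p div 2 + (p - 1)) mod p then - 1 / (2 * real p) else 0))"

lemma cycle_dsq_mult_inv:
  assumes "p = 2 * m" "0 < m"
  shows "cycle_dsq p * cycle_dsq_inv p = 1\<^sub>m p"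
proof (rule eq_matI)
  fix i j assume "i < dim_row (1\<^sub>m p)" "j < dim_col (1\<^sub>m p)"
  then have ij: "i < p" "j < p" by simp_all
  define s where "s = (j + p - i) mod p"
  define u where "u = (s + m) mod p"
  define c where "c t = real (circ_dist p t)^2" for t
  have p: "1 < p" and half: "p div 2 = m" using assms by simp_all
  have offset: "((j + r) mod p + p - i) mod p = (s + r) mod p" for r
    unfolding s_def by (rule cycle_offset_shift[OF ij(1)])
  have "(cycle_dsq p * cycle_dsq_inv p) $$ (i, j)
      = (\<Sum>k<p. cycle_dsq p $$ (i, k) * cycle_dsq_inv p $$ (k, j))"
    using ij carrier_matD[OF cycle_dsq_carrier]
    by (simp add: cycle_dsq_inv_def scalar_prod_def atLeast0LessThan)
  also have "\<dots> = (\<Sum>k<p. c ((k + p - i) mod p) *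
     (1 / (real p * circ_dsq_sum p)
     + (if k = (j + m) mod p then 1 / real p else 0)
     + (if k = (j + (m + 1)) mod p then - 1 / (2 * real p) else 0)
     + (if k = (j + (m + (p - 1))) mod p then - 1 / (2 * real p) else 0)))"
    using ij by (intro sum.cong) (simp_all add: cycle_dsq_inv_def cycle_dsq_index c_def half add.assoc)
  also have "\<dots> = 1 / (real p * circ_dsq_sum p) * (\<Sum>k<p. c ((k + p - i) mod p))
      + 1 / real p * c (((j + m) mod p + p - i) mod p)
      + - 1 / (2 * real p) * (c (((j + (m + 1)) mod p + p - i) mod p)
                            + c (((j + (m + (p - 1))) mod p + p - i) mod p))"
    using p by (simp add: distrib_left sum.distrib sum_distrib_left sum_mult_delta mult.commute)
  also have "((j + m) mod p + p - i) mod p = u"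
    unfolding offset u_def ..
  also have "((j + (m + 1)) mod p + p - i) mod p = Suc u mod p"
    unfolding offset u_def by (simp add: mod_Suc_eq)
  also have "((j + (m + (p - 1))) mod p + p - i) mod p = (u + (p - 1)) mod p"
    unfolding offset u_def by (simp add: mod_add_left_eq add.assoc)
  also have "(\<Sum>k<p. c ((k + p - i) mod p)) = circ_dsq_sum p"
    unfolding c_def circ_dsq_sum_def using sum_cyclic_shift[OF ij(1)] .
  also have "c (Suc u mod p) + c ((u + (p - 1)) mod p)
      = 2 * c u + 2 - (if u = m then 4 * real m else 0)"
    unfolding c_def by (rule circ_dist_sq_second_difference) (use assms in \<open>simp_all add: u_def\<close>)
  also have "u = m \<longleftrightarrow> i = j"
  proof -
    have "s < p" "s = 0 \<longleftrightarrow> i = j" using ij by (auto simp: s_def cycle_offset)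
    then show ?thesis using add_half_mod_eq_half_iff[OF assms(1)] by (simp add: u_def)
  qed
  finally show "(cycle_dsq p * cycle_dsq_inv p) $$ (i, j) = 1\<^sub>m p $$ (i, j)"
    using ij assms circ_dsq_sum_pos[OF p] by (auto simp: field_simps split: if_splits)
qed (simp_all add: cycle_dsq_def cycle_dsq_inv_def)

lemma invertible_mat_right_inverse:
  fixes A :: "'a::field mat"
  assumes "A \<in> carrier_mat n n" "B \<in> carrier_mat n n" "A * B = 1\<^sub>m n"
  shows "invertible_mat A"
  using assms mat_mult_left_right_inverse[OF assms]
  unfolding invertible_mat_def inverts_mat_def by auto

definition pendant_preimage :: "nat \<Rightarrow> real vec" where
  "pendant_preimage p = vec p (\<lambda>k. (real p + 2) / (2 * circ_dsq_sum p)
     + (if k = 0 then 1 + 2 / real p else 0) + (if k = p div 2 then - 2 / real p else 0))"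

lemma cycle_dsq_mult_pendant_preimage:
  assumes "p = 2 * m" "0 < m"
  shows "cycle_dsq p *\<^sub>v pendant_preimage p = pendant_vec p"
proof (rule eq_vecI)
  fix i assume "i < dim_vec (pendant_vec p)"
  then have i: "i < p" by (simp add: pendant_vec_def)
  define t where "t = circ_dist p i"
  define c where "c k = real (circ_dist p k)^2" for k
  have p: "1 < p" and half: "p div 2 = m" and "m < p" using assms by simp_all
  have "(cycle_dsq p *\<^sub>v pendant_preimage p) $ i = (\<Sum>k<p. c ((k + p - i) mod p) *
     ((real p + 2) / (2 * circ_dsq_sum p)
     + (if k = 0 then 1 + 2 / real p else 0) + (if k = m then - 2 / real p else 0)))"
    using i carrier_matD[OF cycle_dsq_carrier]
    by (auto simp: pendant_preimage_def cycle_dsq_index c_def scalar_prod_def half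
        atLeast0LessThan intro!: sum.cong)
  also have "\<dots> = (real p + 2) / (2 * circ_dsq_sum p) * (\<Sum>k<p. c ((k + p - i) mod p))
      + (1 + 2 / real p) * c ((0 + p - i) mod p) + - 2 / real p * c (((0 + m) mod p + p - i) mod p)"
    using \<open>m < p\<close>
    by (simp add: distrib_left sum.distrib sum_distrib_left sum_divide_distrib sum_mult_delta
        mult.commute)
  also have "(\<Sum>k<p. c ((k + p - i) mod p)) = circ_dsq_sum p"
    unfolding c_def circ_dsq_sum_def using sum_cyclic_shift[OF i] .
  also have "c ((0 + p - i) mod p) = real t ^ 2"
    using i by (simp add: c_def t_def circ_dist_reflect)
  also have "c (((0 + m) mod p + p - i) mod p) = (real m - real t) ^ 2"
    using i circ_dist_antipode[OF assms(1), of "(p - i) mod p"] circ_dist_le_half[OF assms(1), of i]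
    unfolding cycle_offset_shift[OF i] by (simp add: c_def t_def circ_dist_reflect of_nat_diff)
  also have "(real p + 2) / (2 * circ_dsq_sum p) * circ_dsq_sum p + (1 + 2 / real p) * real t ^ 2
      + - 2 / real p * (real m - real t) ^ 2 = (real t + 1) ^ 2"
    using assms circ_dsq_sum_pos[OF p] by (simp add: field_simps power2_eq_square)
  finally show "(cycle_dsq p *\<^sub>v pendant_preimage p) $ i = pendant_vec p $ i"
    using i by (simp add: pendant_vec_index t_def)
qed (simp add: pendant_vec_def cycle_dsq_def)

lemma pendant_vec_dot_preimage_pos:
  assumes "p = 2 * m" "0 < m"
  shows "pendant_vec p \<bullet> pendant_preimage p > 0"
proof -
  define S where "S = circ_dsq_sum p"
  define a where "a = (real p + 2) / (2 * S)"
  define x where "x k = (real (circ_dist p k) + 1)^2" for k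
  have p: "1 < p" and "m < p" and half: "p div 2 = m" using assms by simp_all
  have "S < sum x {..<p}"
    unfolding S_def x_def circ_dsq_sum_def using p
    by (intro sum_strict_mono) (auto simp: power_strict_mono)
  have "pendant_vec p \<bullet> pendant_preimage p = (\<Sum>k<p. x k *
      (a + (if k = 0 then 1 + 2 / real p else 0) + (if k = m then - 2 / real p else 0)))"
    by (auto simp: pendant_preimage_def pendant_vec_index scalar_prod_def x_def a_def S_def half
        atLeast0LessThan intro!: sum.cong)
  also have "\<dots> = sum x {..<p} * a + x 0 * (1 + 2 / real p) + x m * (- 2 / real p)"
    using \<open>m < p\<close> by (simp add: distrib_left sum.distrib sum_distrib_right sum_mult_delta)
  also have "x 0 = 1" by (simp add: x_def circ_dist_def)
  also have "x m = (real m + 1)^2" using assms(1) by (simp add: x_def circ_dist_def)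
  also have "sum x {..<p} * a + 1 * (1 + 2 / real p) + (real m + 1)^2 * (- 2 / real p)
      = (real m + 1) * (sum x {..<p} - S) / S"
    using assms circ_dsq_sum_pos[OF p] by (simp add: a_def S_def field_simps power2_eq_square)
  also have "\<dots> > 0"
    using \<open>S < sum x {..<p}\<close> circ_dsq_sum_pos[OF p] by (simp add: S_def)
  finally show ?thesis .
qed

theorem lemma6p2:
  fixes m p :: nat
  assumes "p = 2 * m" and "p \<ge> 4"
  shows "invertible_mat (cycle_dsq p) \<and>
    (\<forall>B. B \<in> carrier_mat p p \<and> cycle_dsq p * B = 1\<^sub>m p \<and> B * cycle_dsq p = 1\<^sub>m p \<longrightarrow>
       pendant_vec p \<bullet> (B *\<^sub>v pendant_vec p) > 0)"
proof (intro conjI allI impI)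
  have "0 < m" using assms by simp
  have inv: "cycle_dsq_inv p \<in> carrier_mat p p" by (simp add: cycle_dsq_inv_def)
  show "invertible_mat (cycle_dsq p)"
    by (rule invertible_mat_right_inverse[OF cycle_dsq_carrier inv])
       (rule cycle_dsq_mult_inv[OF assms(1) \<open>0 < m\<close>])
  fix B assume B: "B \<in> carrier_mat p p \<and> cycle_dsq p * B = 1\<^sub>m p \<and> B * cycle_dsq p = 1\<^sub>m p"
  have y: "pendant_preimage p \<in> carrier_vec p" by (simp add: pendant_preimage_def)
  have "B *\<^sub>v pendant_vec p = B *\<^sub>v (cycle_dsq p *\<^sub>v pendant_preimage p)"
    by (simp add: cycle_dsq_mult_pendant_preimage[OF assms(1) \<open>0 < m\<close>])
  also have "\<dots> = (B * cycle_dsq p) *\<^sub>v pendant_preimage p"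
    using B cycle_dsq_carrier y by (metis assoc_mult_mat_vec)
  also have "\<dots> = pendant_preimage p"
    using B y by simp
  finally show "pendant_vec p \<bullet> (B *\<^sub>v pendant_vec p) > 0"
    using pendant_vec_dot_preimage_pos[OF assms(1) \<open>0 < m\<close>] by simp
qed

end
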